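(* $z_2(5,3)=9$.
   Context: Double Zarankiewicz number: consider configurations $G=([m],[n],E_1\cup E_2)$ where $[m]=\{1,\dots,m\}$, $E_1\subseteq[m]\times[n]$ is a set of 1-edges (cells) and $E_2$ is a set of 2-edges $(i,j;k,l)$ with $i,k\in[m]$, $j,l\in[n]$, $i\ne k$, $j\ne l$; the cells $(i,j)$ and $(k,l)$ are the two halves of this 2-edge. Simplicity condition: the halves of all 2-edges are pairwise distinct cells and none of them belongs to $E_1$. A cell is occupied if it lies in $E_1$ or is a half of some 2-edge. $G$ contains a generalized $C_4$-cycle if (1) there are four 1-edges $(i,j),(i,l),(k,j),(k,l)\in E_1$ with $i\ne k$, $j\ne l$; or (2) there is a 2-edge $(i,j;k,l)\in E_2$ whose two opposite cells $(i,l)$ and $(k,j)$ are both occupied; or (3) there are a 2-edge $(i,j;p,q)\in E_2$ and a cell $(k,l)$ such that the five cells $(k,l),(k,j),(k,q),(i,l),(p,l)$ are pairwise distinct and all occupied. $z_2(m,n)$ is the maximum of $|E_1|+|E_2|$ over all such $G$ satisfying the simplicity condition and containing no generalized $C_4$-cycle. *)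

theory Defs
  imports Main
begin

type_synonym cell = "nat \<times> nat"
type_synonym edge2 = "cell \<times> cell"   (* ((i,j),(k,l)) is the 2-edge (i,j;k,l) *)

definition valid_cell :: "nat \<Rightarrow> nat \<Rightarrow> cell \<Rightarrow> bool" where
  "valid_cell m n c \<longleftrightarrow> fst c \<in> {1..m} \<and> snd c \<in> {1..n}"

definition valid_edge2 :: "nat \<Rightarrow> nat \<Rightarrow> edge2 \<Rightarrow> bool" where
  "valid_edge2 m n e \<longleftrightarrow> (case e of ((i,j),(k,l)) \<Rightarrow>
     valid_cell m n (i,j) \<and> valid_cell m n (k,l) \<and> i \<noteq> k \<and> j \<noteq> l)"

definition halves :: "edge2 \<Rightarrow> cell set" where
  "halves e = {fst e, snd e}"

definition simple_config :: "cell set \<Rightarrow> edge2 set \<Rightarrow> bool" where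
  "simple_config E1 E2 \<longleftrightarrow>
     (\<forall>e\<in>E2. \<forall>e'\<in>E2. e \<noteq> e' \<longrightarrow> halves e \<inter> halves e' = {}) \<and>
     (\<forall>e\<in>E2. halves e \<inter> E1 = {})"

definition occupied :: "cell set \<Rightarrow> edge2 set \<Rightarrow> cell \<Rightarrow> bool" where
  "occupied E1 E2 c \<longleftrightarrow> c \<in> E1 \<or> (\<exists>e\<in>E2. c \<in> halves e)"

definition has_gen_C4 :: "cell set \<Rightarrow> edge2 set \<Rightarrow> bool" where
  "has_gen_C4 E1 E2 \<longleftrightarrow>
     (\<exists>i j k l. i \<noteq> k \<and> j \<noteq> l \<and> (i,j) \<in> E1 \<and> (i,l) \<in> E1 \<and> (k,j) \<in> E1 \<and> (k,l) \<in> E1) \<or>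
     (\<exists>i j k l. ((i,j),(k,l)) \<in> E2 \<and> occupied E1 E2 (i,l) \<and> occupied E1 E2 (k,j)) \<or>
     (\<exists>i j p q k l. ((i,j),(p,q)) \<in> E2 \<and>
        distinct [(k,l),(k,j),(k,q),(i,l),(p,l)] \<and>
        (\<forall>c\<in>{(k,l),(k,j),(k,q),(i,l),(p,l)}. occupied E1 E2 c))"

definition z2_config :: "nat \<Rightarrow> nat \<Rightarrow> cell set \<Rightarrow> edge2 set \<Rightarrow> bool" where
  "z2_config m n E1 E2 \<longleftrightarrow>
     (\<forall>c\<in>E1. valid_cell m n c) \<and> (\<forall>e\<in>E2. valid_edge2 m n e) \<and>
     simple_config E1 E2 \<and> \<not> has_gen_C4 E1 E2"

definition z2 :: "nat \<Rightarrow> nat \<Rightarrow> nat" where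
  "z2 m n = Max {card E1 + card E2 | E1 E2. z2_config m n E1 E2}"

end

(* Counting cells of the 5 x 3 grid gives |E1| + 2|E2| + u = 15, where u is the number of
   unoccupied cells, and rectangle-freeness of E1 gives |E1| <= 8 (no pair of columns is shared
   by two rows).  A configuration with |E1| + |E2| >= 10 therefore has |E2| >= 3 and u <= 2, or
   |E2| = 2, |E1| = 8 and u = 3.  Conditions (2) and (3) force every 2-edge to leave two
   unoccupied cells in its own two rows; this pins all 2-edges to one row in the first case and
   crowds E1 out of the rows of the two 2-edges in the second.  An explicit configuration with
   eight 1-edges and one 2-edge attains 9. *)
theory Submission
  imports Defs
begin

definition rectangle_free :: "('a \<times> 'b) set \<Rightarrow> bool" where
  "rectangle_free E \<longleftrightarrow>
     \<not> (\<exists>i j k l. i \<noteq> k \<and> j \<noteq> l \<and> (i,j) \<in> E \<and> (i,l) \<in> E \<and> (k,j) \<in> E \<and> (k,l) \<in> E)"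

lemma sum_row_pairs_le_if_rectangle_free:
  assumes "finite R" "finite C" "E \<subseteq> R \<times> C" "rectangle_free E"
  shows "(\<Sum>k\<in>R. card (E `` {k}) choose 2) \<le> card C choose 2"
proof -
  define P where "P = (SIGMA k:R. {S. S \<subseteq> E `` {k} \<and> card S = 2})"
  have row_finite: "finite (E `` {k})" for k
    using assms(2,3) by (auto intro: finite_subset[of _ C])
  have "card P = (\<Sum>k\<in>R. card (E `` {k}) choose 2)"
    unfolding P_def using assms(1) row_finite by (simp add: n_subsets)
  moreover have "inj_on snd P"
  proof (rule inj_onI)
    fix x y assume "x \<in> P" "y \<in> P" "snd x = snd y"
    then obtain k k' j l where "x = (k, {j,l})" "y = (k', {j,l})" "j \<noteq> l"
      "{j,l} \<subseteq> E `` {k}" "{j,l} \<subseteq> E `` {k'}"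
      unfolding P_def by (auto simp: card_2_iff)
    with assms(4) show "x = y" unfolding rectangle_free_def by blast
  qed
  moreover have "snd ` P \<subseteq> {S. S \<subseteq> C \<and> card S = 2}"
    using assms(3) unfolding P_def by auto
  ultimately have "card P \<le> card {S. S \<subseteq> C \<and> card S = 2}"
    by (metis assms(2) card_image card_mono finite_Collect_subsets finite_Collect_conjI)
  then show ?thesis using \<open>card P = _\<close> assms(2) by (simp add: n_subsets)
qed

lemma rectangle_free_subset: "rectangle_free E \<Longrightarrow> F \<subseteq> E \<Longrightarrow> rectangle_free F"
  unfolding rectangle_free_def by blast

lemma card_le_if_rectangle_free_three_columns:
  assumes "finite R" "finite C" "card C = 3" "E \<subseteq> R \<times> C" "rectangle_free E"
  shows "card E \<le> card R + 3" and "2 * card E \<le> 3 * card R + 3"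
proof -
  let ?d = "\<lambda>k. card (E `` {k})"
  have E_eq: "E = (SIGMA k:R. E `` {k})" using assms(4) by auto
  have row_le: "?d k \<le> 3" for k
    using assms(2-4) by (metis Image_singleton_iff card_mono mem_Sigma_iff subsetD subsetI)
  have "finite (E `` {k})" for k
    using assms(2,4) by (auto intro: finite_subset[of _ C])
  then have card_E: "card E = (\<Sum>k\<in>R. ?d k)"
    by (subst E_eq) (simp add: assms(1))
  have pairs: "(\<Sum>k\<in>R. ?d k choose 2) \<le> 3"
    using sum_row_pairs_le_if_rectangle_free[OF assms(1,2,4,5)] assms(3) by (simp add: choose_two)
  have small: "a \<le> (a choose 2) + 1 \<and> 2 * a \<le> (a choose 2) + 3" if "a \<le> 3" for a :: nat
  proof -
    have "a = 0 \<or> a = 1 \<or> a = 2 \<or> a = 3" using that by auto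
    then show ?thesis by (auto simp: choose_two)
  qed
  have "card E \<le> (\<Sum>k\<in>R. (?d k choose 2) + 1)"
    unfolding card_E by (rule sum_mono) (use small row_le in blast)
  then show "card E \<le> card R + 3" using pairs by (simp add: sum.distrib sum_Suc)
  have "2 * card E \<le> (\<Sum>k\<in>R. (?d k choose 2) + 3)"
    unfolding card_E sum_distrib_left by (rule sum_mono) (use small row_le in blast)
  then show "2 * card E \<le> 3 * card R + 3" using pairs by (simp add: sum.distrib sum_Suc)
qed

definition grid :: "nat \<Rightarrow> nat \<Rightarrow> cell set" where
  "grid m n = {1..m} \<times> {1..n}"

definition half_cells :: "edge2 set \<Rightarrow> cell set" where
  "half_cells E2 = \<Union> (halves ` E2)"

locale z2_configuration =
  fixes m n :: nat and E1 :: "cell set" and E2 :: "edge2 set"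
  assumes z2_config: "z2_config m n E1 E2"
begin

definition unoccupied :: "cell set" where
  "unoccupied = {c \<in> grid m n. \<not> occupied E1 E2 c}"

lemma E1_subset_grid: "E1 \<subseteq> grid m n"
  using z2_config unfolding z2_config_def valid_cell_def grid_def by auto

lemma edge2_memD:
  assumes "((i,j),(p,q)) \<in> E2"
  shows "i \<in> {1..m} \<and> p \<in> {1..m} \<and> j \<in> {1..n} \<and> q \<in> {1..n} \<and> i \<noteq> p \<and> j \<noteq> q"
  using z2_config assms unfolding z2_config_def valid_edge2_def valid_cell_def by fastforce

lemma half_cells_subset_grid: "half_cells E2 \<subseteq> grid m n"
  unfolding half_cells_def halves_def grid_def by (force dest: edge2_memD)

lemma finite_grid: "finite (grid m n)"
  unfolding grid_def by simp

lemma finite_E2: "finite E2"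
proof (rule finite_subset)
  show "E2 \<subseteq> grid m n \<times> grid m n"
    unfolding grid_def by (force dest: edge2_memD)
qed (simp add: finite_grid)

lemma halves_disjoint: "g \<in> E2 \<Longrightarrow> g' \<in> E2 \<Longrightarrow> g \<noteq> g' \<Longrightarrow> halves g \<inter> halves g' = {}"
  using z2_config unfolding z2_config_def simple_config_def by auto

lemma E1_half_cells_disjoint: "E1 \<inter> half_cells E2 = {}"
  using z2_config unfolding z2_config_def simple_config_def half_cells_def by auto

lemma occupied_iff: "occupied E1 E2 c \<longleftrightarrow> c \<in> E1 \<or> c \<in> half_cells E2"
  unfolding occupied_def half_cells_def by auto

lemma no_gen_C4: "\<not> has_gen_C4 E1 E2"
  using z2_config unfolding z2_config_def by auto

lemma rectangle_free_E1: "rectangle_free E1"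
  using no_gen_C4 unfolding has_gen_C4_def rectangle_free_def by blast

lemma card_half_cells: "card (half_cells E2) = 2 * card E2"
proof -
  have "card (half_cells E2) = (\<Sum>g\<in>E2. card (halves g))"
    unfolding half_cells_def using finite_E2 halves_disjoint
    by (intro card_UN_disjoint) (auto simp: halves_def)
  also have "\<dots> = (\<Sum>g\<in>E2. 2)"
    by (intro sum.cong) (auto simp: halves_def dest: edge2_memD)
  finally show ?thesis by simp
qed

lemma card_Int_partition:
  "card (E1 \<inter> S) + card (half_cells E2 \<inter> S) + card (unoccupied \<inter> S) = card (grid m n \<inter> S)"
proof -
  have "grid m n \<inter> S = (E1 \<inter> S \<union> half_cells E2 \<inter> S) \<union> unoccupied \<inter> S"
    using E1_subset_grid half_cells_subset_grid unfolding unoccupied_def occupied_iff by auto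
  moreover have "finite (E1 \<inter> S)" "finite (half_cells E2 \<inter> S)" "finite (unoccupied \<inter> S)"
    using E1_subset_grid half_cells_subset_grid finite_grid unfolding unoccupied_def
    by (auto intro: finite_subset)
  ultimately show ?thesis using E1_half_cells_disjoint
    by (simp add: card_Un_disjoint unoccupied_def occupied_iff Int_Un_distrib2 disjoint_iff)
qed

lemma card_E1_E2_unoccupied: "card E1 + 2 * card E2 + card unoccupied = m * n"
  using card_Int_partition[of "grid m n"] E1_subset_grid half_cells_subset_grid
  by (simp add: Int_absorb2 card_half_cells unoccupied_def grid_def)

lemma opposite_cell_unoccupied:
  assumes "((i,j),(p,q)) \<in> E2"
  shows "(i,q) \<in> unoccupied \<or> (p,j) \<in> unoccupied"
  using no_gen_C4 assms edge2_memD[OF assms]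
  unfolding has_gen_C4_def unoccupied_def grid_def by blast

lemma column_cell_unoccupied_if_row_full:
  assumes g: "((i,j),(p,q)) \<in> E2"
    and k: "k \<in> {1..m}" "k \<notin> {i,p}" and l: "l \<in> {1..n}" "l \<notin> {j,q}"
    and full: "\<forall>l'\<in>{1..n}. occupied E1 E2 (k,l')"
  shows "(i,l) \<in> unoccupied \<or> (p,l) \<in> unoccupied"
proof (rule ccontr)
  have v: "i \<in> {1..m}" "p \<in> {1..m}" "j \<in> {1..n}" "q \<in> {1..n}" "i \<noteq> p" "j \<noteq> q"
    using edge2_memD[OF g] by auto
  assume "\<not> ?thesis"
  then have "\<forall>c\<in>{(k,l),(k,j),(k,q),(i,l),(p,l)}. occupied E1 E2 c"
    using full k l v unfolding unoccupied_def grid_def by auto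
  moreover have "distinct [(k,l),(k,j),(k,q),(i,l),(p,l)]"
    using k l v by auto
  ultimately have "has_gen_C4 E1 E2"
    using g unfolding has_gen_C4_def by blast
  then show False using no_gen_C4 by simp
qed

lemma finite_unoccupied: "finite unoccupied"
  unfolding unoccupied_def using finite_grid by simp

(* Condition (2) gives one unoccupied cell in rows i and p.  If every other row contained an
   unoccupied cell there would be m - 1 of them, so some row k is full, and condition (3) in a
   column l different from j and q gives a second one. *)
lemma two_unoccupied_in_edge_rows:
  assumes g: "((i,j),(p,q)) \<in> E2" and few: "card unoccupied \<le> m - 2" and "3 \<le> n"
  shows "2 \<le> card (unoccupied \<inter> ({i,p} \<times> UNIV))"
proof -
  have v: "i \<in> {1..m}" "p \<in> {1..m}" "j \<in> {1..n}" "q \<in> {1..n}" "i \<noteq> p" "j \<noteq> q"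
    using edge2_memD[OF g] by auto
  obtain c where c: "c \<in> unoccupied" "c = (i,q) \<or> c = (p,j)"
    using opposite_cell_unoccupied[OF g] by blast
  obtain k where k: "k \<in> {1..m}" "k \<notin> {i,p}" and full: "\<forall>l'\<in>{1..n}. occupied E1 E2 (k,l')"
  proof (rule ccontr)
    assume "\<not> thesis"
    then have "\<forall>k\<in>{1..m} - {i,p}. \<exists>l'\<in>{1..n}. (k,l') \<in> unoccupied"
      using that unfolding unoccupied_def grid_def by blast
    then have "{1..m} - {i,p} \<subseteq> fst ` unoccupied"
      by (metis fst_conv image_eqI subsetI)
    moreover have "fst c \<in> fst ` unoccupied" "fst c \<in> {i,p}"
      using c by auto
    ultimately have "insert (fst c) ({1..m} - {i,p}) \<subseteq> fst ` unoccupied"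
      by blast
    then have "card (insert (fst c) ({1..m} - {i,p})) \<le> card unoccupied"
      by (metis card_image_le card_mono finite_imageI finite_unoccupied le_trans)
    moreover have "card (insert (fst c) ({1..m} - {i,p})) = Suc (m - 2)"
      using \<open>fst c \<in> {i,p}\<close> v by (simp add: card_Diff_subset)
    ultimately show False using few v by linarith
  qed
  obtain l where l: "l \<in> {1..n}" "l \<notin> {j,q}"
  proof -
    have "card ({1..n} - {j,q}) = n - 2"
      using v by (simp add: card_Diff_subset)
    then have "card ({1..n} - {j,q}) > 0"
      using \<open>3 \<le> n\<close> by linarith
    then show thesis
      using that by (metis DiffE card_gt_0_iff ex_in_conv)
  qed
  obtain c' where c': "c' \<in> unoccupied" "c' = (i,l) \<or> c' = (p,l)"
    using column_cell_unoccupied_if_row_full[OF g k l full] by blast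
  have "{c, c'} \<subseteq> unoccupied \<inter> ({i,p} \<times> UNIV)" "c \<noteq> c'"
    using c c' l by auto
  then show ?thesis
    by (metis card_2_iff card_mono finite_Int finite_unoccupied)
qed

(* All unoccupied cells then lie in the rows of every 2-edge, so every 2-edge has a half in
   the row r of one fixed unoccupied cell; these halves are distinct occupied cells of row r. *)
lemma card_E2_less_if_two_unoccupied:
  assumes few: "card unoccupied \<le> 2" and "4 \<le> m" "3 \<le> n"
  shows "card E2 < n"
proof (cases "E2 = {}")
  case False
  have covered: "unoccupied \<subseteq> {i,p} \<times> UNIV" if "((i,j),(p,q)) \<in> E2" for i j p q
  proof -
    have "2 \<le> card (unoccupied \<inter> ({i,p} \<times> UNIV))"
      using two_unoccupied_in_edge_rows[OF that] few assms by simp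
    then have "unoccupied \<inter> ({i,p} \<times> UNIV) = unoccupied"
      using few by (intro card_seteq finite_unoccupied) auto
    then show ?thesis by blast
  qed
  obtain i j p q where "((i,j),(p,q)) \<in> E2"
    using False by (metis ex_in_conv prod.collapse)
  then have "unoccupied \<noteq> {}"
    using two_unoccupied_in_edge_rows assms by fastforce
  then obtain r s where c: "(r,s) \<in> unoccupied" by auto
  define h where "h g = (if fst (fst g) = r then fst g else snd g)" for g :: edge2
  have h_half: "h g \<in> halves g" for g
    unfolding h_def halves_def by auto
  have "h ` E2 \<subseteq> ({r} \<times> {1..n}) - {(r,s)}"
  proof
    fix x assume "x \<in> h ` E2"
    then obtain i j p q where g: "((i,j),(p,q)) \<in> E2" and x: "x = h ((i,j),(p,q))" by auto
    have "r \<in> {i,p}" using covered[OF g] c by auto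
    then have "fst x = r" unfolding x h_def by auto
    moreover have "x \<in> half_cells E2" "x \<notin> unoccupied"
      using g h_half x half_cells_subset_grid unfolding half_cells_def unoccupied_def occupied_iff
      by blast+
    ultimately show "x \<in> ({r} \<times> {1..n}) - {(r,s)}"
      using half_cells_subset_grid c unfolding grid_def by (cases x) auto
  qed
  moreover have "inj_on h E2"
    using halves_disjoint h_half by (metis disjoint_iff inj_onI)
  moreover have "card ({r} \<times> {1..n} - {(r,s)}) = n - 1"
    using c unfolding unoccupied_def grid_def by simp
  ultimately have "card E2 \<le> n - 1"
    by (metis card_image card_mono finite_Diff finite_SigmaI finite_atLeastAtMost finite.emptyI finite.insertI)
  then show ?thesis using \<open>3 \<le> n\<close> by linarith
qed (use \<open>3 \<le> n\<close> in simp)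

(* The two 2-edges must share a row, so their rows U are at most three.  In U x {1..3} the four
   halves and two unoccupied cells leave at most 3|U| - 6 cells for E1; the remaining rows are
   bounded by rectangle-freeness. *)
lemma two_edges_card_E1_le:
  assumes "n = 3" "5 \<le> m" and two: "card E2 = 2" and few: "card unoccupied \<le> 3"
  shows "2 * card E1 \<le> 3 * m"
proof -
  obtain i1 j1 p1 q1 i2 j2 p2 q2 where E2_eq: "E2 = {((i1,j1),(p1,q1)), ((i2,j2),(p2,q2))}"
    using two by (metis card_2_iff prod.collapse)
  then have g1: "((i1,j1),(p1,q1)) \<in> E2" and g2: "((i2,j2),(p2,q2)) \<in> E2" by auto
  let ?rows = "\<lambda>I. unoccupied \<inter> (I \<times> UNIV)"
  have two1: "2 \<le> card (?rows {i1,p1})" and two2: "2 \<le> card (?rows {i2,p2})"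
    using two_unoccupied_in_edge_rows[OF g1] two_unoccupied_in_edge_rows[OF g2] assms by auto
  have meet: "{i1,p1} \<inter> {i2,p2} \<noteq> {}"
  proof
    assume "{i1,p1} \<inter> {i2,p2} = {}"
    then have "card (?rows {i1,p1}) + card (?rows {i2,p2}) = card (?rows {i1,p1} \<union> ?rows {i2,p2})"
      by (intro card_Un_disjoint[symmetric]) (auto simp: finite_unoccupied)
    also have "\<dots> \<le> card unoccupied"
      by (intro card_mono finite_unoccupied) auto
    finally show False using two1 two2 few by linarith
  qed
  define U where "U = {i1,p1} \<union> {i2,p2}"
  have "card {i1,p1} + card {i2,p2} = card U + card ({i1,p1} \<inter> {i2,p2})"
    unfolding U_def by (rule card_Un_Int) simp_all
  moreover have "card {i1,p1} \<le> 2" "card {i2,p2} \<le> 2"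
    by (simp_all add: card_insert_if)
  moreover have "card ({i1,p1} \<inter> {i2,p2}) \<ge> 1"
    using meet by (simp add: Suc_le_eq card_gt_0_iff)
  ultimately have U3: "card U \<le> 3" by linarith
  have U_rows: "U \<subseteq> {1..m}"
    using edge2_memD[OF g1] edge2_memD[OF g2] unfolding U_def by auto
  define S where "S = U \<times> {1..n}"
  have "grid m n \<inter> S = S"
    using U_rows unfolding S_def grid_def by auto
  then have partition: "card (E1 \<inter> S) + card (half_cells E2 \<inter> S) + card (unoccupied \<inter> S) = card S"
    using card_Int_partition[of S] by simp
  have "half_cells E2 \<subseteq> S"
    using edge2_memD[OF g1] edge2_memD[OF g2]
    unfolding S_def U_def half_cells_def halves_def E2_eq by auto
  then have halves_in_S: "card (half_cells E2 \<inter> S) = 4"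
    using card_half_cells two by (simp add: Int_absorb2)
  have "?rows {i1,p1} \<subseteq> unoccupied \<inter> S"
    unfolding S_def U_def unoccupied_def grid_def by auto
  then have "2 \<le> card (unoccupied \<inter> S)"
    using two1 finite_unoccupied by (meson card_mono finite_Int le_trans)
  moreover have "card S = 3 * card U"
    unfolding S_def \<open>n = 3\<close> by (simp add: card_cartesian_product)
  ultimately have inside: "card (E1 \<inter> S) + 6 \<le> 3 * card U"
    using partition halves_in_S by linarith
  have "E1 - S \<subseteq> ({1..m} - U) \<times> {1..3}"
    using E1_subset_grid \<open>n = 3\<close> unfolding S_def grid_def by auto
  moreover have "rectangle_free (E1 - S)"
    using rectangle_free_E1 by (rule rectangle_free_subset) blast
  ultimately have outside: "2 * card (E1 - S) \<le> 3 * card ({1..m} - U) + 3"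
    by (intro card_le_if_rectangle_free_three_columns(2)) auto
  have "card ({1..m} - U) = m - card U"
    using U_rows by (simp add: card_Diff_subset finite_subset)
  moreover have "card U \<le> m"
    using U_rows by (metis card_atLeastAtMost card_mono diff_Suc_1 finite_atLeastAtMost)
  moreover have "card E1 = card (E1 \<inter> S) + card (E1 - S)"
    using finite_grid E1_subset_grid by (metis card_Int_Diff finite_subset)
  ultimately show ?thesis
    using inside outside U3 by linarith
qed

end

lemma z2_eqI:
  assumes le: "\<And>E1 E2. z2_config m n E1 E2 \<Longrightarrow> card E1 + card E2 \<le> k"
    and "z2_config m n E1 E2" "card E1 + card E2 = k"
  shows "z2 m n = k"
proof -
  let ?S = "{card E1 + card E2 | E1 E2. z2_config m n E1 E2}"
  have bound: "x \<le> k" if "x \<in> ?S" for x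
    using that le by blast
  then have "finite ?S"
    by (meson atMost_iff finite_atMost finite_subset subsetI)
  moreover have "k \<in> ?S"
    using assms(2,3) by blast
  ultimately show ?thesis
    unfolding z2_def using bound by (blast intro: Max_eqI)
qed

lemma card_le_nine_if_z2_config_5_3:
  assumes "z2_config 5 3 E1 E2"
  shows "card E1 + card E2 \<le> 9"
proof (rule ccontr)
  interpret z2_configuration 5 3 E1 E2
    using assms by unfold_locales
  assume "\<not> ?thesis"
  then have big: "10 \<le> card E1 + card E2" by simp
  have count: "card E1 + 2 * card E2 + card unoccupied = 15"
    using card_E1_E2_unoccupied by simp
  have E1: "card E1 \<le> 8"
    using card_le_if_rectangle_free_three_columns(1)[of "{1..5}" "{1..3}", OF _ _ _ _ rectangle_free_E1]
      E1_subset_grid unfolding grid_def by simp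
  have "card E2 < 3"
  proof (rule ccontr)
    assume "\<not> card E2 < 3"
    moreover from this have "card unoccupied \<le> 2"
      using count E1 big by linarith
    ultimately show False
      using card_E2_less_if_two_unoccupied by simp
  qed
  then have "card E2 = 2" "card unoccupied \<le> 3" "card E1 = 8"
    using count E1 big by linarith+
  then show False
    using two_edges_card_E1_le by simp
qed

lemma z2_config_5_3_example:
  "z2_config 5 3 {(1,2),(1,3),(2,3),(3,1),(3,2),(4,1),(4,3),(5,1)} {((1,1),(2,2))}"
  (is "z2_config 5 3 ?E1 ?E2")
proof -
  have occupied: "occupied ?E1 ?E2 c \<longleftrightarrow> c \<in> insert (1,1) (insert (2,2) ?E1)" for c
    unfolding occupied_def halves_def by auto
  have row_pairs: "(a,b,d) \<in> {(1,2,3),(3,1,2),(4,1,3)}" if "(a,b) \<in> ?E1" "(a,d) \<in> ?E1" "b < d" for a b d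
    using that by auto
  have "rectangle_free ?E1"
    unfolding rectangle_free_def
  proof clarify
    fix i j k l assume h: "i \<noteq> k" "j \<noteq> l" "(i,j) \<in> ?E1" "(i,l) \<in> ?E1" "(k,j) \<in> ?E1" "(k,l) \<in> ?E1"
    show False
    proof (cases "j < l")
      case True
      then show False using row_pairs[OF h(3,4)] row_pairs[OF h(5,6)] h(1) by auto
    next
      case False
      then have "l < j" using h(2) by simp
      then show False using row_pairs[OF h(4,3)] row_pairs[OF h(6,5)] h(1) by auto
    qed
  qed
  moreover have "\<not> (\<exists>i j k l. ((i,j),(k,l)) \<in> ?E2 \<and> occupied ?E1 ?E2 (i,l) \<and> occupied ?E1 ?E2 (k,j))"
    unfolding occupied by auto
  moreover have "\<not> (\<exists>i j p q k l. ((i,j),(p,q)) \<in> ?E2 \<and> distinct [(k,l),(k,j),(k,q),(i,l),(p,l)] \<and>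
      (\<forall>c\<in>{(k,l),(k,j),(k,q),(i,l),(p,l)}. occupied ?E1 ?E2 c))"
    unfolding occupied by auto
  ultimately have "\<not> has_gen_C4 ?E1 ?E2"
    unfolding has_gen_C4_def rectangle_free_def by blast
  moreover have "simple_config ?E1 ?E2"
    unfolding simple_config_def halves_def by auto
  ultimately show ?thesis
    unfolding z2_config_def valid_cell_def valid_edge2_def by auto
qed

theorem theorem4p3:
  shows "z2 5 3 = 9"
  by (rule z2_eqI[OF card_le_nine_if_z2_config_5_3 z2_config_5_3_example]) simp_all

end
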